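(* Let $X\in\mathbb R^{T\times K}$ have full column rank $K<T$ and let $\Gamma\in\mathbb R^{T\times T}$ satisfy $\|\Gamma\|<1-c$ for a constant $c\in(0,1)$. Then: (i) the matrices $I_T-\Gamma$, $I_T-P\Gamma$, $X'(I_T-\Gamma)X$ and $I_T+A_\Gamma M$ are invertible, where $A_\Gamma=(I_T-\Gamma)^{-1}\Gamma$; (ii) the following identities hold: $(I_T-\Gamma)M_\Gamma=M(I_T+A_\Gamma M)^{-1}$; $P_\Gamma=(I_T-P\Gamma)^{-1}P(I_T-\Gamma)$; $M_\Gamma=(I_T-P\Gamma)^{-1}M$; and for every $y\in\mathbb R^T$, $(X'(I_T-\Gamma)X)^{-1}X'(I_T-\Gamma)y=(X'X)^{-1}X'(I_T+A_\Gamma M)^{-1}y$; (iii) the matrix $(I_T-\Gamma)M_\Gamma+M_\Gamma'(I_T-\Gamma')$ is positive semi-definite, and there are constants $0<c'<C'$ depending only on $c$ such that $c'<\frac{T-K_\Gamma}{T-K}<C'$, where $T-K_\Gamma:=\operatorname{tr}[(I_T-\Gamma)M_\Gamma]$.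
   Context: $\|\cdot\|$ is the operator norm. $P=X(X'X)^{-1}X'$, $M=I_T-P$, $P_\Gamma=X(X'(I_T-\Gamma)X)^{-1}X'(I_T-\Gamma)$, $M_\Gamma=I_T-P_\Gamma$. *)

theory Defs
  imports "Jordan_Normal_Form.DL_Rank"
begin

definition mat_inv :: "real mat \<Rightarrow> real mat" where
  "mat_inv A = (SOME B. B \<in> carrier_mat (dim_row A) (dim_row A) \<and>
       A * B = 1\<^sub>m (dim_row A) \<and> B * A = 1\<^sub>m (dim_row A))"

definition mat_trace :: "real mat \<Rightarrow> real" where
  "mat_trace A = (\<Sum>i<dim_row A. A $$ (i, i))"

definition vec_norm :: "real vec \<Rightarrow> real" where
  "vec_norm v = sqrt (v \<bullet> v)"

definition op_norm :: "real mat \<Rightarrow> real" where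
  "op_norm A = Sup {vec_norm (A *\<^sub>v v) | v. v \<in> carrier_vec (dim_col A) \<and> vec_norm v = 1}"

definition psd :: "real mat \<Rightarrow> bool" where
  "psd A \<longleftrightarrow> square_mat A \<and> (\<forall>v \<in> carrier_vec (dim_row A). v \<bullet> (A *\<^sub>v v) \<ge> 0)"

definition full_col_rank :: "real mat \<Rightarrow> bool" where
  "full_col_rank X \<longleftrightarrow> vec_space.rank (dim_row X) (X::real mat) = dim_col X"

definition projP :: "real mat \<Rightarrow> real mat" where
  "projP X = X * mat_inv (X\<^sup>T * X) * X\<^sup>T"

definition projM :: "real mat \<Rightarrow> real mat" where
  "projM X = 1\<^sub>m (dim_row X) - projP X"

definition projPG :: "real mat \<Rightarrow> real mat \<Rightarrow> real mat" where
  "projPG X G = X * mat_inv (X\<^sup>T * (1\<^sub>m (dim_row X) - G) * X) * X\<^sup>T * (1\<^sub>m (dim_row X) - G)"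

definition projMG :: "real mat \<Rightarrow> real mat \<Rightarrow> real mat" where
  "projMG X G = 1\<^sub>m (dim_row X) - projPG X G"

definition AG :: "real mat \<Rightarrow> real mat" where
  "AG G = mat_inv (1\<^sub>m (dim_row G) - G) * G"

end

theory Submission
  imports Defs
begin

text \<open>Everything rests on one estimate: since the operator norm of \<open>\<Gamma>\<close> is below \<open>1 - c\<close>,
  \<open>v'(I - \<Gamma>)v \<ge> c|v|\<^sup>2\<close>. This rules out nontrivial kernels of \<open>I - \<Gamma>\<close>, \<open>I - P\<Gamma>\<close>,
  \<open>I - \<Gamma>P\<close> and \<open>X'(I - \<Gamma>)X\<close>. The identities follow from the factorisation
  \<open>I + A\<^sub>\<Gamma>M = (I - \<Gamma>)\<^sup>-\<^sup>1(I - \<Gamma>P)\<close> together with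
  \<open>(X'(I - \<Gamma>)X)\<^sup>-\<^sup>1X'(I - \<Gamma>P) = (X'X)\<^sup>-\<^sup>1X'\<close>. For the trace, \<open>N = (I - \<Gamma>)M\<^sub>\<Gamma>\<close>
  satisfies \<open>X'N = 0\<close>, hence \<open>N = M(I - \<Gamma>)(I - P\<Gamma>)\<^sup>-\<^sup>1M\<close>, and \<open>tr N\<close> is the sum of the values
  of the form \<open>u \<mapsto> u'(I - \<Gamma>)(I - P\<Gamma>)\<^sup>-\<^sup>1u\<close> on the columns of \<open>M\<close>, whose squared lengths
  add up to \<open>T - K\<close>; on vectors with \<open>Pu = 0\<close> this form lies between \<open>c|u|\<^sup>2\<close> and \<open>|u|\<^sup>2/c\<close>.\<close>

lemma scalar_prod_self_nonneg: "(v::real vec) \<bullet> v \<ge> 0"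
  using conjugate_square_ge_0_vec[of v] by simp

lemma scalar_prod_self_eq_0_iff:
  "(v::real vec) \<in> carrier_vec n \<Longrightarrow> v \<bullet> v = 0 \<longleftrightarrow> v = 0\<^sub>v n"
  using conjugate_square_eq_0_vec[of v n] by simp

lemma two_scalar_prod_le:
  fixes x y :: "real vec"
  assumes x: "x \<in> carrier_vec n" and y: "y \<in> carrier_vec n"
  shows "2 * (x \<bullet> y) \<le> x \<bullet> x + y \<bullet> y"
proof -
  have "(x - y) \<bullet> (x - y) = x \<bullet> x - 2 * (x \<bullet> y) + y \<bullet> y"
    using x y by (simp add: minus_scalar_prod_distrib scalar_prod_minus_distrib comm_scalar_prod[of y n x])
  thus ?thesis using scalar_prod_self_nonneg[of "x - y"] by linarith
qed

lemma abs_scalar_prod_le_if_norm_le: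
  fixes u w :: "real vec"
  assumes u: "u \<in> carrier_vec n" and w: "w \<in> carrier_vec n" and k: "k > 0"
    and norm_le: "w \<bullet> w \<le> k\<^sup>2 * (u \<bullet> u)"
  shows "\<bar>u \<bullet> w\<bar> \<le> k * (u \<bullet> u)"
proof -
  have "s * (u \<bullet> w) \<le> k * (u \<bullet> u)" if s: "s = 1 \<or> s = -1" for s :: real
  proof -
    have "2 * ((k \<cdot>\<^sub>v u) \<bullet> (s \<cdot>\<^sub>v w)) \<le> (k \<cdot>\<^sub>v u) \<bullet> (k \<cdot>\<^sub>v u) + (s \<cdot>\<^sub>v w) \<bullet> (s \<cdot>\<^sub>v w)"
      using u w by (intro two_scalar_prod_le) auto
    hence "k * (s * (u \<bullet> w)) \<le> k * (k * (u \<bullet> u))"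
      using u w s norm_le by (auto simp: power2_eq_square algebra_simps)
    thus ?thesis using k by simp
  qed
  from this[of 1] this[of "-1"] k show ?thesis by (auto simp: abs_le_iff)
qed

lemma mat_inv_right_inverse:
  fixes A B :: "real mat"
  assumes A: "A \<in> carrier_mat n n" and B: "B \<in> carrier_mat n n" and AB: "A * B = 1\<^sub>m n"
  shows "invertible_mat A" and "mat_inv A = B" and "B * A = 1\<^sub>m n"
proof -
  show BA: "B * A = 1\<^sub>m n" using mat_mult_left_right_inverse[OF A B AB] .
  show "invertible_mat A" unfolding invertible_mat_def inverts_mat_def
    using A B AB BA by (intro conjI exI[of _ B]) auto
  have "\<exists>C. C \<in> carrier_mat n n \<and> A * C = 1\<^sub>m n \<and> C * A = 1\<^sub>m n"
    using B AB BA by blast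
  then have C: "mat_inv A \<in> carrier_mat n n" "mat_inv A * A = 1\<^sub>m n"
    using A unfolding mat_inv_def by (metis (mono_tags, lifting) carrier_matD(1) someI_ex)+
  have "mat_inv A = mat_inv A * (A * B)" using C AB by simp
  also have "\<dots> = B" using C A B by (simp add: assoc_mult_mat[symmetric, of _ n n])
  finally show "mat_inv A = B" .
qed

lemma mat_inv_if_trivial_kernel:
  fixes A :: "real mat"
  assumes A: "A \<in> carrier_mat n n"
    and kernel: "\<And>v. v \<in> carrier_vec n \<Longrightarrow> A *\<^sub>v v = 0\<^sub>v n \<Longrightarrow> v = 0\<^sub>v n"
  shows "invertible_mat A" and "mat_inv A \<in> carrier_mat n n"
    and "A * mat_inv A = 1\<^sub>m n" and "mat_inv A * A = 1\<^sub>m n"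
proof -
  have "det A \<noteq> 0" using det_0_iff_vec_prod_zero_field[OF A] kernel by auto
  from det_non_zero_imp_unit[OF A this, of "()"]
  obtain B where B: "B \<in> carrier_mat n n" "A * B = 1\<^sub>m n"
    unfolding Units_def ring_mat_def by auto
  with mat_inv_right_inverse[OF A B] show "invertible_mat A" "mat_inv A \<in> carrier_mat n n"
    "A * mat_inv A = 1\<^sub>m n" "mat_inv A * A = 1\<^sub>m n" by auto
qed

lemma mat_trace_mult_comm:
  fixes A B :: "real mat"
  assumes A: "A \<in> carrier_mat n m" and B: "B \<in> carrier_mat m n"
  shows "mat_trace (A * B) = mat_trace (B * A)"
proof -
  have "mat_trace (A * B) = (\<Sum>i<n. \<Sum>j<m. A $$ (i,j) * B $$ (j,i))"
    unfolding mat_trace_def using A B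
    by (auto simp: scalar_prod_def atLeast0LessThan intro!: sum.cong)
  also have "\<dots> = (\<Sum>j<m. \<Sum>i<n. B $$ (j,i) * A $$ (i,j))"
    by (subst sum.swap) (simp add: mult.commute)
  also have "\<dots> = mat_trace (B * A)"
    unfolding mat_trace_def using A B
    by (auto simp: scalar_prod_def atLeast0LessThan intro!: sum.cong)
  finally show ?thesis .
qed

lemma full_col_rank_kernel_trivial:
  fixes X :: "real mat"
  assumes X: "X \<in> carrier_mat T K" and rank: "full_col_rank X"
    and b: "b \<in> carrier_vec K" and Xb: "X *\<^sub>v b = 0\<^sub>v T"
  shows "b = 0\<^sub>v K"
proof (rule ccontr)
  assume nz: "b \<noteq> 0\<^sub>v K"
  interpret vec_space "TYPE(real)" T .
  have rk: "rank X = K" using rank X unfolding full_col_rank_def by auto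
  show False
  proof (cases "distinct (cols X)")
    case True
    have "lin_indpt (set (cols X))" using full_rank_lin_indpt[OF X rk True] .
    moreover have "lin_dep (set (cols X))" using lin_depI[OF X b nz Xb True] .
    ultimately show False by simp
  next
    case False
    \<comment> \<open>a repeated column caps the rank below the number of columns\<close>
    obtain S where S: "maximal S (\<lambda>S. S \<subseteq> set (cols X) \<and> lin_indpt S)"
      using maximal_exists[of "\<lambda>S. S \<subseteq> set (cols X) \<and> lin_indpt S" "card (set (cols X))" "{}"]
      by (meson List.finite_set card_mono empty_iff empty_subsetI finite_lin_indpt2 rev_finite_subset)
    then have "card S \<le> card (set (cols X))" by (simp add: card_mono maximal_def)
    also have "card (set (cols X)) < length (cols X)"
      using False card_distinct card_length le_neq_implies_less by blast
    finally have "card S < K" using X by simp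
    then show False using rank_card_indpt[OF X S] rk by simp
  qed
qed

lemma vec_norm_smult: "vec_norm (a \<cdot>\<^sub>v v) = \<bar>a\<bar> * vec_norm v"
  unfolding vec_norm_def by (simp add: real_sqrt_mult)

lemma scalar_prod_self_le_sum_abs_squared:
  fixes w :: "real vec"
  shows "w \<bullet> w \<le> (\<Sum>i<dim_vec w. \<bar>w $ i\<bar>)\<^sup>2"
proof -
  let ?s = "\<Sum>i<dim_vec w. \<bar>w $ i\<bar>"
  have "w \<bullet> w = (\<Sum>i<dim_vec w. \<bar>w $ i\<bar> * \<bar>w $ i\<bar>)"
    unfolding scalar_prod_def by (simp add: atLeast0LessThan abs_mult_self_eq)
  also have "\<dots> \<le> (\<Sum>i<dim_vec w. \<bar>w $ i\<bar> * ?s)"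
    by (intro sum_mono mult_left_mono member_le_sum) auto
  finally show ?thesis by (simp add: power2_eq_square sum_distrib_right)
qed

lemma vec_norm_mult_unit_le_sum_abs:
  fixes A :: "real mat"
  assumes A: "A \<in> carrier_mat n m" and u: "u \<in> carrier_vec m" and unit: "vec_norm u = 1"
  shows "vec_norm (A *\<^sub>v u) \<le> (\<Sum>i<n. \<Sum>j<m. \<bar>A $$ (i,j)\<bar>)"
proof -
  have u_entry: "\<bar>u $ j\<bar> \<le> 1" if j: "j < m" for j
  proof -
    have "(u $ j)\<^sup>2 \<le> (\<Sum>i\<in>{0..<m}. u $ i * u $ i)"
      unfolding power2_eq_square by (rule member_le_sum) (use j in auto)
    also have "\<dots> = 1" using unit u unfolding vec_norm_def scalar_prod_def by simp
    finally show ?thesis by (simp add: abs_square_le_1)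
  qed
  have Au_entry: "\<bar>(A *\<^sub>v u) $ i\<bar> \<le> (\<Sum>j<m. \<bar>A $$ (i,j)\<bar>)" if i: "i < n" for i
  proof -
    have "(A *\<^sub>v u) $ i = (\<Sum>j<m. A $$ (i,j) * u $ j)"
      using A u i by (simp add: scalar_prod_def atLeast0LessThan)
    also have "\<bar>\<dots>\<bar> \<le> (\<Sum>j<m. \<bar>A $$ (i,j) * u $ j\<bar>)" by (rule sum_abs)
    also have "\<dots> \<le> (\<Sum>j<m. \<bar>A $$ (i,j)\<bar>)"
      by (rule sum_mono) (use u_entry in \<open>simp add: abs_mult mult_left_le\<close>)
    finally show ?thesis .
  qed
  let ?s = "\<Sum>i<n. \<bar>(A *\<^sub>v u) $ i\<bar>"
  have "(A *\<^sub>v u) \<bullet> (A *\<^sub>v u) \<le> ?s\<^sup>2"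
    using scalar_prod_self_le_sum_abs_squared[of "A *\<^sub>v u"] A by simp
  then have "vec_norm (A *\<^sub>v u) \<le> ?s"
    unfolding vec_norm_def by (metis real_sqrt_abs real_sqrt_le_mono sum_abs_ge_zero abs_of_nonneg)
  also have "\<dots> \<le> (\<Sum>i<n. \<Sum>j<m. \<bar>A $$ (i,j)\<bar>)"
    using Au_entry by (intro sum_mono) simp
  finally show ?thesis .
qed

lemma mult_mat_vec_zero [simp]: "dim_col A = n \<Longrightarrow> A *\<^sub>v 0\<^sub>v n = (0\<^sub>v (dim_row A) :: 'a :: semiring_0 vec)"
  by (intro eq_vecI) (auto simp: scalar_prod_def)

lemma mult_mat_vec_carrier_dims [simp]: "dim_row A = n \<Longrightarrow> A *\<^sub>v v \<in> carrier_vec n"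
  by (simp add: carrier_dim_vec)

lemma vec_norm_mult_le_op_norm:
  fixes A :: "real mat"
  assumes A: "A \<in> carrier_mat n m" and v: "v \<in> carrier_vec m"
  shows "vec_norm (A *\<^sub>v v) \<le> op_norm A * vec_norm v"
proof (cases "v = 0\<^sub>v m")
  case True
  then show ?thesis using A by (simp add: vec_norm_def)
next
  case False
  let ?S = "{vec_norm (A *\<^sub>v v) | v. v \<in> carrier_vec (dim_col A) \<and> vec_norm v = 1}"
  have "bdd_above ?S"
    unfolding bdd_above_def using vec_norm_mult_unit_le_sum_abs[OF A] A by blast
  have norm_pos: "vec_norm v > 0"
    using False v scalar_prod_self_eq_0_iff[OF v] scalar_prod_self_nonneg[of v]
    unfolding vec_norm_def by auto
  define u where "u = (1 / vec_norm v) \<cdot>\<^sub>v v"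
  have u: "u \<in> carrier_vec m" "vec_norm u = 1"
    using v norm_pos unfolding u_def by (auto simp: vec_norm_smult)
  then have "vec_norm (A *\<^sub>v u) \<le> op_norm A"
    unfolding op_norm_def using A \<open>bdd_above ?S\<close> by (intro cSup_upper) auto
  moreover have "vec_norm (A *\<^sub>v u) = vec_norm (A *\<^sub>v v) / vec_norm v"
    unfolding u_def using mult_mat_vec[OF A v] norm_pos by (simp add: vec_norm_smult)
  ultimately show ?thesis using norm_pos by (simp add: field_simps)
qed

lemma op_norm_less_imp_scalar_prod_le:
  fixes A :: "real mat"
  assumes A: "A \<in> carrier_mat n m" and less: "op_norm A < r" and v: "v \<in> carrier_vec m"
  shows "(A *\<^sub>v v) \<bullet> (A *\<^sub>v v) \<le> r\<^sup>2 * (v \<bullet> v)"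
proof -
  have norm_nonneg: "0 \<le> vec_norm w" for w
    unfolding vec_norm_def using scalar_prod_self_nonneg[of w] by simp
  have "vec_norm (A *\<^sub>v v) \<le> r * vec_norm v"
    using vec_norm_mult_le_op_norm[OF A v] less norm_nonneg[of v]
    by (meson mult_right_mono order.trans less_imp_le)
  then have "(vec_norm (A *\<^sub>v v))\<^sup>2 \<le> (r * vec_norm v)\<^sup>2"
    using norm_nonneg by (intro power_mono) auto
  then show ?thesis unfolding vec_norm_def
    by (simp add: power_mult_distrib scalar_prod_self_nonneg)
qed

lemma scalar_prod_symmetric_mat_swap:
  fixes A :: "'a :: comm_semiring_0 mat"
  assumes A: "A \<in> carrier_mat n n" and sym: "A\<^sup>T = A"
    and x: "x \<in> carrier_vec n" and y: "y \<in> carrier_vec n"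
  shows "x \<bullet> (A *\<^sub>v y) = (A *\<^sub>v x) \<bullet> y"
  using transpose_vec_mult_scalar[OF A y x] sym by simp

lemma scalar_prod_idempotent_symmetric:
  fixes A :: "'a :: comm_semiring_0 mat"
  assumes A: "A \<in> carrier_mat n n" and sym: "A\<^sup>T = A" and idem: "A * A = A"
    and v: "v \<in> carrier_vec n"
  shows "v \<bullet> (A *\<^sub>v v) = (A *\<^sub>v v) \<bullet> (A *\<^sub>v v)"
proof -
  have "A *\<^sub>v (A *\<^sub>v v) = A *\<^sub>v v" using idem A v by (metis assoc_mult_mat_vec)
  then show ?thesis using scalar_prod_symmetric_mat_swap[OF A sym v, of "A *\<^sub>v v"] A v by simp
qed

text \<open>Matrix algebra with the carrier conditions replaced by dimension equations, so that
  the simplifier can discharge them; used to normalize products to right-associated form.\<close>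

lemma assoc_mult_mat_dims:
  fixes A B C :: "'a :: semiring_0 mat"
  shows "dim_col A = dim_row B \<Longrightarrow> dim_col B = dim_row C \<Longrightarrow> A * B * C = A * (B * C)"
  by (rule assoc_mult_mat[of A "dim_row A" "dim_col A" B "dim_col B" C "dim_col C"]) auto

lemma mult_minus_distrib_mat_dims:
  fixes A B C :: "'a :: ring mat"
  shows "dim_col A = dim_row C \<Longrightarrow> dim_row B = dim_row C \<Longrightarrow> dim_col B = dim_col C \<Longrightarrow>
    A * (B - C) = A * B - A * C"
  by (rule mult_minus_distrib_mat[of A "dim_row A" "dim_col A" B "dim_col B"]) auto

lemma minus_mult_distrib_mat_dims:
  fixes A B C :: "'a :: ring mat"
  shows "dim_row A = dim_row B \<Longrightarrow> dim_col A = dim_col B \<Longrightarrow> dim_col B = dim_row C \<Longrightarrow>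
    (A - B) * C = A * C - B * C"
  by (rule minus_mult_distrib_mat[of A "dim_row A" "dim_col A" B C "dim_col C"]) auto

lemma assoc_mult_mat_vec_dims:
  fixes A B :: "'a :: semiring_0 mat"
  assumes "dim_col A = dim_row B" and "dim_vec v = dim_col B"
  shows "A * B *\<^sub>v v = A *\<^sub>v (B *\<^sub>v v)"
  using assms by (intro assoc_mult_mat_vec[of A "dim_row A" "dim_col A" B "dim_col B"]) (auto intro: carrier_vecI)

lemmas mat_algebra_dims = assoc_mult_mat_dims mult_minus_distrib_mat_dims minus_mult_distrib_mat_dims
  assoc_mult_mat_vec_dims

lemma mult_inverse_cancel:
  fixes A B Z :: "'a :: semiring_1 mat"
  assumes "A * B = 1\<^sub>m n" and "dim_col A = n" "dim_row B = n" "dim_col B = n" "dim_row Z = n"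
  shows "A * (B * Z) = Z"
proof -
  have "A * (B * Z) = A * B * Z" using assms by (intro assoc_mult_mat_dims[symmetric]) auto
  then show ?thesis using assms by (simp add: left_mult_one_mat')
qed

lemma eq_if_minus_vec_eq_0:
  fixes a b :: "'a :: ab_group_add vec"
  assumes "a \<in> carrier_vec n" "b \<in> carrier_vec n" and "a - b = 0\<^sub>v n"
  shows "a = b"
proof (rule eq_vecI)
  fix i assume "i < dim_vec b"
  then have "(a - b) $ i = 0" using assms by simp
  then show "a $ i = b $ i" using index_minus_vec(1)[OF \<open>i < dim_vec b\<close>, of a] by simp
qed (use assms in auto)

lemma one_minus_mult_vec:
  fixes A :: "'a :: ring_1 mat"
  assumes "dim_row A = n" "dim_col A = n" and "v \<in> carrier_vec n"
  shows "(1\<^sub>m n - A) *\<^sub>v v = v - A *\<^sub>v v"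
proof -
  have "A \<in> carrier_mat n n" using assms by (intro carrier_matI)
  from minus_mult_distrib_mat_vec[OF one_carrier_mat this assms(3)] show ?thesis
    using assms(3) by simp
qed

lemma psd_add_transpose:
  fixes A :: "real mat"
  assumes A: "A \<in> carrier_mat n n" and nonneg: "\<And>v. v \<in> carrier_vec n \<Longrightarrow> 0 \<le> v \<bullet> (A *\<^sub>v v)"
  shows "psd (A + A\<^sup>T)"
  unfolding psd_def
proof (intro conjI ballI)
  show "square_mat (A + A\<^sup>T)" using A by simp
  fix v :: "real vec" assume "v \<in> carrier_vec (dim_row (A + A\<^sup>T))"
  then have v: "v \<in> carrier_vec n" using A by simp
  have At: "A\<^sup>T \<in> carrier_mat n n" using A by simp
  have "v \<bullet> ((A + A\<^sup>T) *\<^sub>v v) = v \<bullet> (A *\<^sub>v v) + v \<bullet> (A\<^sup>T *\<^sub>v v)"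
    using add_mult_distrib_mat_vec[OF A At v] scalar_prod_add_distrib[OF v] A v by simp
  also have "v \<bullet> (A\<^sup>T *\<^sub>v v) = v \<bullet> (A *\<^sub>v v)"
    using transpose_vec_mult_scalar[OF At v v] comm_scalar_prod[of "A *\<^sub>v v" n v] A v by simp
  finally show "0 \<le> v \<bullet> ((A + A\<^sup>T) *\<^sub>v v)" using nonneg[OF v] by simp
qed

locale regressor =
  fixes X :: "real mat" and T K :: nat
  assumes X_carrier: "X \<in> carrier_mat T K" and full_col_rank: "full_col_rank X"
begin

abbreviation gram_inv :: "real mat" where "gram_inv \<equiv> mat_inv (X\<^sup>T * X)"
abbreviation P :: "real mat" where "P \<equiv> projP X"
abbreviation M :: "real mat" where "M \<equiv> projM X"

lemma dim_X [simp]: "dim_row X = T" "dim_col X = K"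
  using X_carrier by auto

lemma gram_inverse:
  "gram_inv \<in> carrier_mat K K" "X\<^sup>T * X * gram_inv = 1\<^sub>m K" "gram_inv * (X\<^sup>T * X) = 1\<^sub>m K"
proof -
  have gram: "X\<^sup>T * X \<in> carrier_mat K K" using X_carrier by simp
  have kernel: "v = 0\<^sub>v K" if v: "v \<in> carrier_vec K" and Gv: "(X\<^sup>T * X) *\<^sub>v v = 0\<^sub>v K" for v
  proof -
    have Xv: "X *\<^sub>v v \<in> carrier_vec T" using X_carrier v by simp
    have XXv: "X\<^sup>T *\<^sub>v (X *\<^sub>v v) \<in> carrier_vec K" using X_carrier Xv by simp
    have "0 = v \<bullet> (X\<^sup>T *\<^sub>v (X *\<^sub>v v))"
      using Gv v assoc_mult_mat_vec[of "X\<^sup>T" K T X K v] X_carrier by simp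
    also have "\<dots> = (X *\<^sub>v v) \<bullet> (X *\<^sub>v v)"
      using transpose_vec_mult_scalar[OF X_carrier v Xv] comm_scalar_prod[OF v XXv] by simp
    finally have "X *\<^sub>v v = 0\<^sub>v T" using scalar_prod_self_eq_0_iff[OF Xv] by simp
    thus ?thesis using full_col_rank_kernel_trivial[OF X_carrier full_col_rank v] by simp
  qed
  show "gram_inv \<in> carrier_mat K K" "X\<^sup>T * X * gram_inv = 1\<^sub>m K" "gram_inv * (X\<^sup>T * X) = 1\<^sub>m K"
    using mat_inv_if_trivial_kernel[OF gram kernel] by auto
qed

lemma dim_gram_inv [simp]: "dim_row gram_inv = K" "dim_col gram_inv = K"
  using gram_inverse(1) by auto

lemma gram_inv_cancel [simp]:
  "dim_row Z = K \<Longrightarrow> gram_inv * (X\<^sup>T * (X * Z)) = Z"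
  "dim_row Z = K \<Longrightarrow> X\<^sup>T * (X * (gram_inv * Z)) = Z"
  "gram_inv * (X\<^sup>T * X) = 1\<^sub>m K" "X\<^sup>T * (X * gram_inv) = 1\<^sub>m K"
proof -
  show "gram_inv * (X\<^sup>T * X) = 1\<^sub>m K" by (fact gram_inverse(3))
  show "X\<^sup>T * (X * gram_inv) = 1\<^sub>m K"
    using gram_inverse(2) by (simp add: assoc_mult_mat_dims)
  fix Z :: "real mat" assume Z: "dim_row Z = K"
  have "gram_inv * (X\<^sup>T * (X * Z)) = gram_inv * (X\<^sup>T * X * Z)"
    using Z by (simp add: assoc_mult_mat_dims)
  then show "gram_inv * (X\<^sup>T * (X * Z)) = Z"
    using mult_inverse_cancel[OF gram_inverse(3)] Z by simp
  have "X\<^sup>T * (X * (gram_inv * Z)) = X\<^sup>T * X * (gram_inv * Z)"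
    using Z by (simp add: assoc_mult_mat_dims)
  then show "X\<^sup>T * (X * (gram_inv * Z)) = Z"
    using mult_inverse_cancel[OF gram_inverse(2)] Z by simp
qed

lemma gram_inv_symmetric: "gram_inv\<^sup>T = gram_inv"
proof -
  have gram: "X\<^sup>T * X \<in> carrier_mat K K" using X_carrier by simp
  have "(X\<^sup>T * X)\<^sup>T = X\<^sup>T * X" using transpose_mult[of "X\<^sup>T" K T X K] X_carrier by simp
  then have "X\<^sup>T * X * gram_inv\<^sup>T = 1\<^sub>m K"
    using transpose_mult[OF gram_inverse(1) gram] gram_inverse(3) by simp
  then have "gram_inv = gram_inv\<^sup>T"
    using mat_inv_right_inverse(2)[OF gram] gram_inverse(1) by simp
  then show ?thesis by simp
qed

lemma P_eq: "P = X * (gram_inv * X\<^sup>T)"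
  unfolding projP_def by (simp add: assoc_mult_mat_dims)

lemma M_eq: "M = 1\<^sub>m T - P"
  unfolding projM_def by simp

lemma P_carrier: "P \<in> carrier_mat T T" unfolding P_eq by (intro carrier_matI) simp_all
lemma M_carrier: "M \<in> carrier_mat T T" unfolding M_eq using P_carrier by (intro minus_carrier_mat)

lemma dim_P_M [simp]: "dim_row P = T" "dim_col P = T" "dim_row M = T" "dim_col M = T"
  using P_carrier M_carrier by auto

lemma P_mult_X: "P * X = X"
  unfolding P_eq by (simp add: assoc_mult_mat_dims)

lemma P_mult_X_cancel [simp]: "dim_row Z = K \<Longrightarrow> P * (X * Z) = X * Z"
proof -
  assume "dim_row Z = K"
  then have "P * (X * Z) = P * X * Z" by (simp add: assoc_mult_mat_dims)
  then show ?thesis unfolding P_mult_X .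
qed

lemma P_idempotent: "P * P = P"
proof -
  have "P * P = X * (gram_inv * X\<^sup>T)" by (subst (2) P_eq) simp
  then show ?thesis using P_eq by simp
qed

lemma P_symmetric: "P\<^sup>T = P"
proof -
  have "gram_inv * X\<^sup>T \<in> carrier_mat K T" by (intro carrier_matI) simp_all
  then have "P\<^sup>T = (gram_inv * X\<^sup>T)\<^sup>T * X\<^sup>T"
    unfolding P_eq using transpose_mult[OF X_carrier] by simp
  also have "\<dots> = X * gram_inv\<^sup>T * X\<^sup>T"
    using transpose_mult[OF gram_inverse(1), of "X\<^sup>T" T] X_carrier by simp
  finally show ?thesis unfolding gram_inv_symmetric P_eq by (simp add: assoc_mult_mat_dims)
qed

lemma M_symmetric: "M\<^sup>T = M"
  unfolding M_eq using transpose_minus[OF one_carrier_mat P_carrier] P_symmetric by simp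

lemma P_mult_M: "P * M = 0\<^sub>m T T"
  unfolding M_eq by (rule eq_matI) (simp_all add: mult_minus_distrib_mat_dims P_idempotent)

lemma M_idempotent: "M * M = M"
proof -
  have "M * M = M - P * M"
    by (subst (1) M_eq) (simp add: minus_mult_distrib_mat_dims)
  also have "\<dots> = M" unfolding P_mult_M by (intro eq_matI) simp_all
  finally show ?thesis .
qed

lemmas P_mult_vec_swap = scalar_prod_symmetric_mat_swap[OF P_carrier P_symmetric]

lemmas M_mult_vec_swap = scalar_prod_symmetric_mat_swap[OF M_carrier M_symmetric]

lemma M_mult_vec: "v \<in> carrier_vec T \<Longrightarrow> M *\<^sub>v v = v - P *\<^sub>v v"
  unfolding M_eq using minus_mult_distrib_mat_vec[OF one_carrier_mat P_carrier] by simp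

lemma P_mult_vec_idem: "v \<in> carrier_vec T \<Longrightarrow> P *\<^sub>v (P *\<^sub>v v) = P *\<^sub>v v"
  using P_idempotent P_carrier by (metis assoc_mult_mat_vec)

lemma scalar_prod_self_split:
  assumes v: "v \<in> carrier_vec T"
  shows "v \<bullet> v = (P *\<^sub>v v) \<bullet> (P *\<^sub>v v) + (M *\<^sub>v v) \<bullet> (M *\<^sub>v v)"
proof -
  have "v \<bullet> v = v \<bullet> (P *\<^sub>v v) + v \<bullet> (M *\<^sub>v v)"
    using v scalar_prod_minus_distrib[OF v v mult_mat_vec_carrier[OF P_carrier v]]
    by (simp add: M_mult_vec)
  then show ?thesis
    using scalar_prod_idempotent_symmetric[OF P_carrier P_symmetric P_idempotent v]
      scalar_prod_idempotent_symmetric[OF M_carrier M_symmetric M_idempotent v] by simp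
qed

lemma mat_trace_P: "mat_trace P = real K"
proof -
  have "mat_trace P = mat_trace (gram_inv * X\<^sup>T * X)"
    unfolding P_eq by (rule mat_trace_mult_comm[OF X_carrier], intro carrier_matI) simp_all
  also have "gram_inv * X\<^sup>T * X = 1\<^sub>m K" by (simp add: assoc_mult_mat_dims)
  finally show ?thesis unfolding mat_trace_def by simp
qed

lemma sum_col_M_norms: "(\<Sum>i<T. col M i \<bullet> col M i) = real T - real K"
proof -
  have "col M i \<bullet> col M i = 1 - P $$ (i, i)" if i: "i < T" for i
  proof -
    have "col M i \<bullet> col M i = (M * M) $$ (i, i)"
      using i col_transpose[of i M] M_symmetric by simp
    also have "\<dots> = 1 - P $$ (i, i)"
      unfolding M_idempotent using i by (simp add: M_eq)
    finally show ?thesis .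
  qed
  then have "(\<Sum>i<T. col M i \<bullet> col M i) = real T - mat_trace P"
    unfolding mat_trace_def by (simp add: sum_subtractf)
  then show ?thesis unfolding mat_trace_P .
qed

end

locale contracting_regressor = regressor +
  fixes G :: "real mat" and c :: real
  assumes G_carrier: "G \<in> carrier_mat T T"
    and c_pos: "0 < c" and c_less_1: "c < 1" and op_norm_G: "op_norm G < 1 - c"
begin

lemma dim_G [simp]: "dim_row G = T" "dim_col G = T"
  using G_carrier by auto

lemma G_norm_le: "v \<in> carrier_vec T \<Longrightarrow> (G *\<^sub>v v) \<bullet> (G *\<^sub>v v) \<le> (1 - c)\<^sup>2 * (v \<bullet> v)"
  by (rule op_norm_less_imp_scalar_prod_le[OF G_carrier op_norm_G])

lemma abs_G_quadratic_form_le: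
  assumes v: "v \<in> carrier_vec T"
  shows "\<bar>v \<bullet> (G *\<^sub>v v)\<bar> \<le> (1 - c) * (v \<bullet> v)"
  using abs_scalar_prod_le_if_norm_le[OF v _ _ G_norm_le[OF v]] c_less_1 by simp

definition IG :: "real mat" where "IG = 1\<^sub>m T - G"
definition IPG :: "real mat" where "IPG = 1\<^sub>m T - P * G"
definition IGP :: "real mat" where "IGP = 1\<^sub>m T - G * P"
definition IG_inv :: "real mat" where "IG_inv = mat_inv IG"
definition IPG_inv :: "real mat" where "IPG_inv = mat_inv IPG"
definition IGP_inv :: "real mat" where "IGP_inv = mat_inv IGP"
definition wgram_inv :: "real mat" where "wgram_inv = mat_inv (X\<^sup>T * IG * X)"

lemma IG_carrier: "IG \<in> carrier_mat T T" unfolding IG_def by (rule minus_carrier_mat, rule carrier_matI) simp_all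
lemma IPG_carrier: "IPG \<in> carrier_mat T T" unfolding IPG_def by (rule minus_carrier_mat, rule carrier_matI) simp_all
lemma IGP_carrier: "IGP \<in> carrier_mat T T" unfolding IGP_def by (rule minus_carrier_mat, rule carrier_matI) simp_all

lemma dim_I_minus [simp]:
  "dim_row IG = T" "dim_col IG = T" "dim_row IPG = T" "dim_col IPG = T" "dim_row IGP = T" "dim_col IGP = T"
  using IG_carrier IPG_carrier IGP_carrier by auto

lemma IG_mult_vec: "v \<in> carrier_vec T \<Longrightarrow> IG *\<^sub>v v = v - G *\<^sub>v v"
  unfolding IG_def by (rule one_minus_mult_vec) simp_all

lemma IG_quadratic_form: "v \<in> carrier_vec T \<Longrightarrow> v \<bullet> (IG *\<^sub>v v) = v \<bullet> v - v \<bullet> (G *\<^sub>v v)"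
  by (simp add: IG_mult_vec scalar_prod_minus_distrib)

lemma IG_quadratic_form_ge:
  assumes v: "v \<in> carrier_vec T"
  shows "c * (v \<bullet> v) \<le> v \<bullet> (IG *\<^sub>v v)"
  using IG_quadratic_form[OF v] abs_G_quadratic_form_le[OF v] by (simp add: algebra_simps abs_le_iff)

lemma eq_0_if_IG_quadratic_form_le_0:
  assumes v: "v \<in> carrier_vec T" and le: "v \<bullet> (IG *\<^sub>v v) \<le> 0"
  shows "v = 0\<^sub>v T"
proof -
  have "c * (v \<bullet> v) \<le> 0" using IG_quadratic_form_ge[OF v] le by simp
  then have "v \<bullet> v = 0"
    using c_pos scalar_prod_self_nonneg[of v] by (simp add: mult_le_0_iff)
  then show ?thesis using scalar_prod_self_eq_0_iff[OF v] by simp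
qed

lemma IG_kernel: "v \<in> carrier_vec T \<Longrightarrow> IG *\<^sub>v v = 0\<^sub>v T \<Longrightarrow> v = 0\<^sub>v T"
  using eq_0_if_IG_quadratic_form_le_0 by simp

lemma IPG_kernel:
  assumes v: "v \<in> carrier_vec T" and IPGv: "IPG *\<^sub>v v = 0\<^sub>v T"
  shows "v = 0\<^sub>v T"
proof -
  have Gv: "G *\<^sub>v v \<in> carrier_vec T" using v by simp
  have "IPG *\<^sub>v v = v - P *\<^sub>v (G *\<^sub>v v)"
    unfolding IPG_def using one_minus_mult_vec[of "P * G" T v] v by (simp add: assoc_mult_mat_vec_dims)
  then have v_eq: "v = P *\<^sub>v (G *\<^sub>v v)"
    using IPGv eq_if_minus_vec_eq_0[OF v] v by simp
  then have "P *\<^sub>v v = v" using P_mult_vec_idem[OF Gv] by simp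
  have "v \<bullet> (IG *\<^sub>v v) = v \<bullet> v - v \<bullet> (G *\<^sub>v v)" by (rule IG_quadratic_form[OF v])
  also have "v \<bullet> v = v \<bullet> (P *\<^sub>v (G *\<^sub>v v))" by (subst (2) v_eq) simp
  also have "\<dots> = v \<bullet> (G *\<^sub>v v)" using P_mult_vec_swap[OF v Gv] \<open>P *\<^sub>v v = v\<close> by simp
  finally show ?thesis using eq_0_if_IG_quadratic_form_le_0[OF v] by simp
qed

lemma IGP_kernel:
  assumes v: "v \<in> carrier_vec T" and IGPv: "IGP *\<^sub>v v = 0\<^sub>v T"
  shows "v = 0\<^sub>v T"
proof -
  define w where "w = P *\<^sub>v v"
  have w: "w \<in> carrier_vec T" using v unfolding w_def by simp
  have "IGP *\<^sub>v v = v - G *\<^sub>v w"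
    unfolding IGP_def w_def using one_minus_mult_vec[of "G * P" T v] v by (simp add: assoc_mult_mat_vec_dims)
  then have v_eq: "v = G *\<^sub>v w" using IGPv eq_if_minus_vec_eq_0[OF v] w by simp
  have "IPG *\<^sub>v w = w - P *\<^sub>v (G *\<^sub>v w)"
    unfolding IPG_def using one_minus_mult_vec[of "P * G" T w] w by (simp add: assoc_mult_mat_vec_dims)
  also have "P *\<^sub>v (G *\<^sub>v w) = w" using v_eq unfolding w_def by simp
  finally have "w = 0\<^sub>v T" using IPG_kernel[OF w] w by simp
  then show ?thesis using v_eq by simp
qed

lemma wgram_kernel:
  assumes b: "b \<in> carrier_vec K" and zero: "(X\<^sup>T * IG * X) *\<^sub>v b = 0\<^sub>v K"
  shows "b = 0\<^sub>v K"
proof -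
  define u where "u = X *\<^sub>v b"
  have u: "u \<in> carrier_vec T" unfolding u_def by simp
  have "0 = b \<bullet> (X\<^sup>T *\<^sub>v (IG *\<^sub>v u))"
    using zero b unfolding u_def by (simp add: assoc_mult_mat_vec_dims)
  also have "\<dots> = u \<bullet> (IG *\<^sub>v u)"
    using transpose_vec_mult_scalar[OF X_carrier b, of "IG *\<^sub>v u"] comm_scalar_prod[OF b, of "X\<^sup>T *\<^sub>v (IG *\<^sub>v u)"]
      comm_scalar_prod[of "IG *\<^sub>v u" T u] u
    unfolding u_def by simp
  finally have "u = 0\<^sub>v T" using eq_0_if_IG_quadratic_form_le_0[OF u] by simp
  then show ?thesis using full_col_rank_kernel_trivial[OF X_carrier full_col_rank b] u_def by simp
qed

lemma wgram_carrier: "X\<^sup>T * IG * X \<in> carrier_mat K K"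
  by (intro carrier_matI) simp_all

lemmas IG_inverse = mat_inv_if_trivial_kernel[OF IG_carrier IG_kernel, folded IG_inv_def]
lemmas IPG_inverse = mat_inv_if_trivial_kernel[OF IPG_carrier IPG_kernel, folded IPG_inv_def]
lemmas IGP_inverse = mat_inv_if_trivial_kernel[OF IGP_carrier IGP_kernel, folded IGP_inv_def]
lemmas wgram_inverse = mat_inv_if_trivial_kernel[OF wgram_carrier wgram_kernel, folded wgram_inv_def]

lemma dim_inverses [simp]:
  "dim_row IG_inv = T" "dim_col IG_inv = T" "dim_row IPG_inv = T" "dim_col IPG_inv = T"
  "dim_row IGP_inv = T" "dim_col IGP_inv = T" "dim_row wgram_inv = K" "dim_col wgram_inv = K"
  using IG_inverse(2) IPG_inverse(2) IGP_inverse(2) wgram_inverse(2) by auto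

lemmas inverse_cancel [simp] =
  IG_inverse(3,4) IPG_inverse(3,4) IGP_inverse(3,4)
  mult_inverse_cancel[OF IG_inverse(3)] mult_inverse_cancel[OF IG_inverse(4)]
  mult_inverse_cancel[OF IPG_inverse(3)] mult_inverse_cancel[OF IPG_inverse(4)]
  mult_inverse_cancel[OF IGP_inverse(3)] mult_inverse_cancel[OF IGP_inverse(4)]

lemma wgram_inv_cancel [simp]:
  "wgram_inv * (X\<^sup>T * (IG * X)) = 1\<^sub>m K"
  "dim_row Z = K \<Longrightarrow> wgram_inv * (X\<^sup>T * (IG * (X * Z))) = Z"
  "dim_row Z = K \<Longrightarrow> X\<^sup>T * (IG * (X * (wgram_inv * Z))) = Z"
proof -
  show one: "wgram_inv * (X\<^sup>T * (IG * X)) = 1\<^sub>m K"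
    using wgram_inverse(4) by (simp add: assoc_mult_mat_dims)
  fix Z :: "real mat" assume Z: "dim_row Z = K"
  have "wgram_inv * (X\<^sup>T * (IG * (X * Z))) = wgram_inv * (X\<^sup>T * (IG * X)) * Z"
    using Z by (simp add: assoc_mult_mat_dims)
  then show "wgram_inv * (X\<^sup>T * (IG * (X * Z))) = Z" using one Z by simp
  have "X\<^sup>T * (IG * (X * (wgram_inv * Z))) = X\<^sup>T * IG * X * wgram_inv * Z"
    using Z by (simp add: assoc_mult_mat_dims)
  then show "X\<^sup>T * (IG * (X * (wgram_inv * Z))) = Z" using wgram_inverse(3) Z by simp
qed

definition PG :: "real mat" where "PG = X * (wgram_inv * (X\<^sup>T * IG))"
definition MG :: "real mat" where "MG = 1\<^sub>m T - PG"
definition H :: "real mat" where "H = 1\<^sub>m T + IG_inv * (G * M)"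
definition H_inv :: "real mat" where "H_inv = IGP_inv * IG"
definition N :: "real mat" where "N = IG * MG"

lemma dim_PG_MG_H_N [simp]:
  "dim_row PG = T" "dim_col PG = T" "dim_row MG = T" "dim_col MG = T" "dim_row H = T" "dim_col H = T"
  "dim_row H_inv = T" "dim_col H_inv = T" "dim_row N = T" "dim_col N = T"
  unfolding PG_def MG_def H_def H_inv_def N_def by simp_all

lemma H_eq: "H = IG_inv * IGP"
proof -
  have "IG_inv * IG = 1\<^sub>m T" by simp
  then have IG_inv_eq: "IG_inv - IG_inv * G = 1\<^sub>m T"
    unfolding IG_def by (simp add: mult_minus_distrib_mat_dims)
  have "H = 1\<^sub>m T + (IG_inv * G - IG_inv * (G * P))"
    unfolding H_def M_eq by (simp add: mat_algebra_dims)
  also have "\<dots> = IG_inv - IG_inv * (G * P)"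
  proof (rule eq_matI)
    fix i j assume "i < dim_row (IG_inv - IG_inv * (G * P))" "j < dim_col (IG_inv - IG_inv * (G * P))"
    then show "(1\<^sub>m T + (IG_inv * G - IG_inv * (G * P))) $$ (i, j) = (IG_inv - IG_inv * (G * P)) $$ (i, j)"
      using arg_cong[OF IG_inv_eq, of "\<lambda>A. A $$ (i, j)"] by simp
  qed simp_all
  also have "\<dots> = IG_inv * IGP"
    unfolding IGP_def by (simp add: mult_minus_distrib_mat_dims)
  finally show ?thesis .
qed

lemma IG_mult_H [simp]: "IG * H = IGP"
  unfolding H_eq by simp

lemma H_inverse: "H * H_inv = 1\<^sub>m T" "invertible_mat H" "mat_inv H = H_inv"
proof -
  show HH: "H * H_inv = 1\<^sub>m T"
    unfolding H_eq H_inv_def by (simp add: assoc_mult_mat_dims)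
  have "H \<in> carrier_mat T T" "H_inv \<in> carrier_mat T T" by (auto intro: carrier_matI)
  from mat_inv_right_inverse[OF this HH]
  show "invertible_mat H" "mat_inv H = H_inv" by auto
qed

lemma wgram_inv_mult_IGP [simp]:
  "wgram_inv * (X\<^sup>T * IGP) = gram_inv * X\<^sup>T"
  "dim_row Z = T \<Longrightarrow> wgram_inv * (X\<^sup>T * (IGP * Z)) = gram_inv * (X\<^sup>T * Z)"
proof -
  \<comment> \<open>\<open>X'(I - \<Gamma>P) = X'(I - \<Gamma>)P\<close>, because \<open>X'P = X'\<close>\<close>
  have "X\<^sup>T * IGP = X\<^sup>T * (IG * (X * (gram_inv * X\<^sup>T)))"
    unfolding IGP_def IG_def P_eq by (simp add: mat_algebra_dims)
  then show one: "wgram_inv * (X\<^sup>T * IGP) = gram_inv * X\<^sup>T" by simp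
  fix Z :: "real mat" assume Z: "dim_row Z = T"
  then have "wgram_inv * (X\<^sup>T * (IGP * Z)) = wgram_inv * (X\<^sup>T * IGP) * Z"
    by (simp add: assoc_mult_mat_dims)
  then show "wgram_inv * (X\<^sup>T * (IGP * Z)) = gram_inv * (X\<^sup>T * Z)"
    unfolding one using Z by (simp add: assoc_mult_mat_dims)
qed

lemma PG_mult_H [simp]: "PG * H = P"
  unfolding PG_def H_eq P_eq by (simp add: assoc_mult_mat_dims)

lemma N_mult_H: "N * H = M"
proof -
  have "N * H = IGP - IG * P"
    unfolding N_def MG_def by (simp add: mat_algebra_dims)
  also have "\<dots> = M"
    unfolding IGP_def IG_def M_eq
    by (rule eq_matI) (simp_all add: minus_mult_distrib_mat_dims)
  finally show ?thesis .
qed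

lemma N_eq: "N = M * H_inv"
proof -
  have "N = N * H * H_inv" using H_inverse(1) by (simp add: assoc_mult_mat_dims)
  then show ?thesis unfolding N_mult_H .
qed

lemma wgram_inv_mult_IG: "wgram_inv * (X\<^sup>T * IG) = gram_inv * (X\<^sup>T * H_inv)"
proof -
  have "wgram_inv * (X\<^sup>T * IG) = wgram_inv * (X\<^sup>T * IG) * (H * H_inv)"
    using H_inverse(1) by simp
  also have "\<dots> = gram_inv * (X\<^sup>T * H_inv)"
    unfolding H_eq by (simp add: assoc_mult_mat_dims)
  finally show ?thesis .
qed

lemma IPG_mult_PG: "IPG * PG = P * IG"
proof -
  have "IPG * PG = PG - P * (G * PG)"
    unfolding IPG_def by (simp add: mat_algebra_dims)
  also have "\<dots> = P * (IG * PG)"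
    unfolding IG_def by (simp add: mat_algebra_dims PG_def)
  also have "\<dots> = P * IG"
    unfolding PG_def P_eq by (simp add: assoc_mult_mat_dims)
  finally show ?thesis .
qed

lemma PG_eq: "PG = IPG_inv * (P * IG)"
proof -
  have "PG = IPG_inv * (IPG * PG)" by simp
  then show ?thesis unfolding IPG_mult_PG .
qed

lemma MG_eq: "MG = IPG_inv * M"
proof -
  have "IPG_inv * IPG = 1\<^sub>m T" by simp
  then have IPG_inv_eq: "IPG_inv - IPG_inv * (P * G) = 1\<^sub>m T"
    unfolding IPG_def by (simp add: mult_minus_distrib_mat_dims)
  have "MG = 1\<^sub>m T - (IPG_inv * P - IPG_inv * (P * G))"
    unfolding MG_def PG_eq IG_def by (simp add: mat_algebra_dims)
  also have "\<dots> = IPG_inv - IPG_inv * P"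
  proof (rule eq_matI)
    fix i j assume "i < dim_row (IPG_inv - IPG_inv * P)" "j < dim_col (IPG_inv - IPG_inv * P)"
    then show "(1\<^sub>m T - (IPG_inv * P - IPG_inv * (P * G))) $$ (i, j) = (IPG_inv - IPG_inv * P) $$ (i, j)"
      using arg_cong[OF IPG_inv_eq, of "\<lambda>A. A $$ (i, j)"] by simp
  qed simp_all
  also have "\<dots> = IPG_inv * M"
    unfolding M_eq by (simp add: mult_minus_distrib_mat_dims)
  finally show ?thesis .
qed

lemma transpose_X_mult_N: "X\<^sup>T * N = 0\<^sub>m K T"
proof -
  have "X\<^sup>T * N = X\<^sup>T * IG - X\<^sup>T * IG"
    unfolding N_def MG_def PG_def by (simp add: mat_algebra_dims)
  then show ?thesis by (simp, intro eq_matI) simp_all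
qed

lemma N_quadratic_form_nonneg:
  assumes v: "v \<in> carrier_vec T"
  shows "0 \<le> v \<bullet> (N *\<^sub>v v)"
proof -
  define w where "w = MG *\<^sub>v v"
  define b where "b = (wgram_inv * (X\<^sup>T * IG)) *\<^sub>v v"
  have w: "w \<in> carrier_vec T" and b: "b \<in> carrier_vec K" and IGw: "IG *\<^sub>v w \<in> carrier_vec T"
    unfolding w_def b_def by simp_all
  have "w = v - X *\<^sub>v b"
    unfolding w_def b_def MG_def PG_def using one_minus_mult_vec[of "PG" T v] v
    by (simp add: assoc_mult_mat_vec_dims PG_def)
  then have v_minus_w: "v - w = X *\<^sub>v b" using v by (intro eq_vecI) simp_all
  have "X\<^sup>T *\<^sub>v (IG *\<^sub>v w) = (X\<^sup>T * N) *\<^sub>v v"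
    unfolding N_def w_def using v by (simp add: assoc_mult_mat_vec_dims)
  also have "\<dots> = 0\<^sub>v K" unfolding transpose_X_mult_N using v by (intro eq_vecI) simp_all
  finally have orth: "(v - w) \<bullet> (IG *\<^sub>v w) = 0"
    unfolding v_minus_w using transpose_vec_mult_scalar[OF X_carrier b IGw]
      comm_scalar_prod[of "X *\<^sub>v b" T "IG *\<^sub>v w"] IGw b by simp
  have "v \<bullet> (N *\<^sub>v v) = w \<bullet> (IG *\<^sub>v w) + (v - w) \<bullet> (IG *\<^sub>v w)"
    unfolding N_def w_def using v minus_scalar_prod_distrib[OF v _ IGw, of w] w
    by (simp add: assoc_mult_mat_vec_dims w_def)
  also have "\<dots> \<ge> 0"
    using orth IG_quadratic_form_ge[OF w] mult_nonneg_nonneg[OF less_imp_le[OF c_pos] scalar_prod_self_nonneg[of w]]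
    by simp
  finally show ?thesis .
qed

lemma N_eq_M_sandwich: "N = M * (IG * (IPG_inv * M))"
proof -
  have "P * N = 0\<^sub>m T T"
    unfolding P_eq by (simp add: assoc_mult_mat_dims transpose_X_mult_N)
  then have "M * N = N"
    unfolding M_eq by (simp add: minus_mult_distrib_mat_dims, intro eq_matI) simp_all
  then show ?thesis unfolding N_def MG_eq by simp
qed

lemma P_mult_col_M: "i < T \<Longrightarrow> P *\<^sub>v col M i = 0\<^sub>v T"
  using col_mult2[OF P_carrier M_carrier, of i] P_mult_M by simp

lemma diag_N:
  assumes i: "i < T"
  shows "N $$ (i, i) = col M i \<bullet> (IG *\<^sub>v (IPG_inv *\<^sub>v col M i))"
proof -
  have "IPG_inv * M \<in> carrier_mat T T" by (intro carrier_matI) simp_all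
  then have "col (IG * (IPG_inv * M)) i = IG *\<^sub>v (IPG_inv *\<^sub>v col M i)"
    using col_mult2[OF IG_carrier _ i] col_mult2[OF IPG_inverse(2) M_carrier i] by simp
  moreover have "row M i = col M i" using col_transpose[of i M] M_symmetric i by simp
  ultimately show ?thesis using i by (subst N_eq_M_sandwich) simp
qed

lemma resolvent_projections:
  assumes u: "u \<in> carrier_vec T" and Pu: "P *\<^sub>v u = 0\<^sub>v T"
  defines "z \<equiv> IPG_inv *\<^sub>v u"
  shows "M *\<^sub>v z = u" and "P *\<^sub>v z = P *\<^sub>v (G *\<^sub>v z)"
    and "u \<bullet> (IG *\<^sub>v z) = z \<bullet> (IG *\<^sub>v z)"
proof -
  have z: "z \<in> carrier_vec T" and Gz: "G *\<^sub>v z \<in> carrier_vec T" and PGz: "P *\<^sub>v (G *\<^sub>v z) \<in> carrier_vec T"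
    unfolding z_def by simp_all
  have "u = IPG *\<^sub>v z"
    unfolding z_def using u by (simp add: assoc_mult_mat_vec_dims[symmetric])
  also have "\<dots> = z - P *\<^sub>v (G *\<^sub>v z)"
    unfolding IPG_def using one_minus_mult_vec[of "P * G" T z] z by (simp add: assoc_mult_mat_vec_dims)
  finally have u_eq: "u = z - P *\<^sub>v (G *\<^sub>v z)" .
  have "P *\<^sub>v z - P *\<^sub>v (G *\<^sub>v z) = 0\<^sub>v T"
    using Pu unfolding u_eq mult_minus_distrib_mat_vec[OF P_carrier z PGz] P_mult_vec_idem[OF Gz] .
  then show Pz: "P *\<^sub>v z = P *\<^sub>v (G *\<^sub>v z)" using eq_if_minus_vec_eq_0[of "P *\<^sub>v z" T] by simp
  show Mz: "M *\<^sub>v z = u" unfolding M_mult_vec[OF z] Pz u_eq ..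
  have "P *\<^sub>v (IG *\<^sub>v z) = 0\<^sub>v T"
    using mult_minus_distrib_mat_vec[OF P_carrier z Gz] Pz by (simp add: IG_mult_vec[OF z])
  then have "M *\<^sub>v (IG *\<^sub>v z) = IG *\<^sub>v z" using M_mult_vec[of "IG *\<^sub>v z"] by simp
  then show "u \<bullet> (IG *\<^sub>v z) = z \<bullet> (IG *\<^sub>v z)"
    using M_mult_vec_swap[OF z, of "IG *\<^sub>v z"] Mz by simp
qed

text \<open>Both bounds compare \<open>z'(I - \<Gamma>)z\<close>, \<open>z = (I - P\<Gamma>)\<^sup>-\<^sup>1u\<close>, with
  \<open>|z|\<^sup>2 = |u|\<^sup>2 + |P\<Gamma>z|\<^sup>2 \<le> |u|\<^sup>2 + (1 - c)\<^sup>2|z|\<^sup>2\<close>.\<close>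

lemma resolvent_quadratic_form_bounds:
  assumes u: "u \<in> carrier_vec T" and Pu: "P *\<^sub>v u = 0\<^sub>v T"
  shows "c * (u \<bullet> u) \<le> u \<bullet> (IG *\<^sub>v (IPG_inv *\<^sub>v u))"
    and "c * (u \<bullet> (IG *\<^sub>v (IPG_inv *\<^sub>v u))) \<le> u \<bullet> u"
proof -
  define z where "z = IPG_inv *\<^sub>v u"
  have z: "z \<in> carrier_vec T" and Gz: "G *\<^sub>v z \<in> carrier_vec T" unfolding z_def by simp_all
  note projections = resolvent_projections[OF u Pu, folded z_def]
  have zz: "z \<bullet> z = (P *\<^sub>v (G *\<^sub>v z)) \<bullet> (P *\<^sub>v (G *\<^sub>v z)) + u \<bullet> u"
    using scalar_prod_self_split[OF z] unfolding projections(1,2) .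
  have "(P *\<^sub>v (G *\<^sub>v z)) \<bullet> (P *\<^sub>v (G *\<^sub>v z)) \<le> (G *\<^sub>v z) \<bullet> (G *\<^sub>v z)"
    using scalar_prod_self_split[OF Gz] scalar_prod_self_nonneg[of "M *\<^sub>v (G *\<^sub>v z)"] by linarith
  then have z_le_u: "c * (2 - c) * (z \<bullet> z) \<le> u \<bullet> u"
    using zz G_norm_le[OF z] by (simp add: power2_eq_square algebra_simps)
  have "z \<bullet> (IG *\<^sub>v z) \<le> (2 - c) * (z \<bullet> z)"
    using IG_quadratic_form[OF z] abs_G_quadratic_form_le[OF z] by (simp add: algebra_simps abs_le_iff)
  then have "c * (z \<bullet> (IG *\<^sub>v z)) \<le> c * (2 - c) * (z \<bullet> z)"
    using c_pos by (simp add: mult_left_mono)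
  then show "c * (u \<bullet> (IG *\<^sub>v (IPG_inv *\<^sub>v u))) \<le> u \<bullet> u"
    using projections(3) z_le_u unfolding z_def by simp
  have "c * (u \<bullet> u) \<le> c * (z \<bullet> z)"
    using zz scalar_prod_self_nonneg[of "P *\<^sub>v (G *\<^sub>v z)"] c_pos by simp
  then show "c * (u \<bullet> u) \<le> u \<bullet> (IG *\<^sub>v (IPG_inv *\<^sub>v u))"
    using projections(3) IG_quadratic_form_ge[OF z] unfolding z_def by simp
qed

lemma mat_trace_N_bounds:
  "c * (real T - real K) \<le> mat_trace N" "c * mat_trace N \<le> real T - real K"
proof -
  have trace: "mat_trace N = (\<Sum>i<T. col M i \<bullet> (IG *\<^sub>v (IPG_inv *\<^sub>v col M i)))"
    unfolding mat_trace_def by (simp add: diag_N)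
  have col: "col M i \<in> carrier_vec T" for i by (simp add: carrier_dim_vec)
  note bounds = resolvent_quadratic_form_bounds[OF col P_mult_col_M]
  show "c * (real T - real K) \<le> mat_trace N"
    unfolding trace sum_col_M_norms[symmetric] sum_distrib_left
    using bounds(1) by (intro sum_mono) simp
  show "c * mat_trace N \<le> real T - real K"
    unfolding trace sum_col_M_norms[symmetric] sum_distrib_left
    using bounds(2) by (intro sum_mono) simp
qed

lemma N_carrier: "N \<in> carrier_mat T T" by (intro carrier_matI) simp_all

lemma projPG_eq: "projPG X G = PG"
  unfolding projPG_def dim_X IG_def[symmetric] wgram_inv_def[symmetric] PG_def
  by (simp add: assoc_mult_mat_dims)

lemma projMG_eq: "projMG X G = MG"
  unfolding projMG_def MG_def projPG_eq by simp

lemma one_plus_AG_mult_M: "1\<^sub>m T + AG G * M = H"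
  unfolding AG_def dim_G IG_def[symmetric] IG_inv_def[symmetric] H_def
  by (simp add: assoc_mult_mat_dims)

lemma invertible_I_minus_G: "invertible_mat (1\<^sub>m T - G)"
  using IG_inverse(1) unfolding IG_def .

lemma invertible_I_minus_PG: "invertible_mat (1\<^sub>m T - P * G)"
  using IPG_inverse(1) unfolding IPG_def .

lemma invertible_weighted_gram: "invertible_mat (X\<^sup>T * (1\<^sub>m T - G) * X)"
  using wgram_inverse(1) unfolding IG_def .

lemma invertible_I_plus_AG_M: "invertible_mat (1\<^sub>m T + AG G * M)"
  unfolding one_plus_AG_mult_M by (rule H_inverse(2))

lemma I_minus_G_mult_projMG: "(1\<^sub>m T - G) * projMG X G = M * mat_inv (1\<^sub>m T + AG G * M)"
  unfolding projMG_eq one_plus_AG_mult_M H_inverse(3) IG_def[symmetric] N_def[symmetric] by (rule N_eq)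

lemma projPG_resolvent: "projPG X G = mat_inv (1\<^sub>m T - P * G) * P * (1\<^sub>m T - G)"
  unfolding projPG_eq IPG_def[symmetric] IPG_inv_def[symmetric] IG_def[symmetric] PG_eq
  by (simp add: assoc_mult_mat_dims)

lemma projMG_resolvent: "projMG X G = mat_inv (1\<^sub>m T - P * G) * M"
  unfolding projMG_eq IPG_def[symmetric] IPG_inv_def[symmetric] by (rule MG_eq)

lemma weighted_estimator_eq:
  "mat_inv (X\<^sup>T * (1\<^sub>m T - G) * X) * X\<^sup>T * (1\<^sub>m T - G) =
   gram_inv * X\<^sup>T * mat_inv (1\<^sub>m T + AG G * M)"
  unfolding one_plus_AG_mult_M H_inverse(3) IG_def[symmetric] wgram_inv_def[symmetric]
  using wgram_inv_mult_IG by (simp add: assoc_mult_mat_dims)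

lemma psd_symmetric_part: "psd ((1\<^sub>m T - G) * projMG X G + (projMG X G)\<^sup>T * (1\<^sub>m T - G\<^sup>T))"
proof -
  have "1\<^sub>m T - G\<^sup>T = IG\<^sup>T"
    unfolding IG_def using transpose_minus[OF one_carrier_mat G_carrier] by simp
  then have "(projMG X G)\<^sup>T * (1\<^sub>m T - G\<^sup>T) = N\<^sup>T"
    unfolding projMG_eq N_def using transpose_mult[OF IG_carrier, of MG T] by (simp add: carrier_matI)
  then show ?thesis
    unfolding projMG_eq IG_def[symmetric] N_def[symmetric]
    using psd_add_transpose[OF N_carrier N_quadratic_form_nonneg] by simp
qed

lemma trace_ratio_bounds:
  assumes "K < T"
  shows "c / 2 < mat_trace ((1\<^sub>m T - G) * projMG X G) / real (T - K)"
    and "mat_trace ((1\<^sub>m T - G) * projMG X G) / real (T - K) < 2 / c"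
proof -
  have pos: "real (T - K) > 0" and diff: "real (T - K) = real T - real K" using assms by auto
  have N: "(1\<^sub>m T - G) * projMG X G = N" unfolding projMG_eq IG_def[symmetric] N_def ..
  have "c \<le> mat_trace N / real (T - K)"
    using mat_trace_N_bounds(1) pos unfolding diff by (simp add: field_simps)
  then show "c / 2 < mat_trace ((1\<^sub>m T - G) * projMG X G) / real (T - K)"
    unfolding N using c_pos by (simp add: field_simps)
  have "mat_trace N / real (T - K) \<le> 1 / c"
    using mat_trace_N_bounds(2) pos c_pos unfolding diff by (simp add: field_simps)
  then show "mat_trace ((1\<^sub>m T - G) * projMG X G) / real (T - K) < 2 / c"
    unfolding N using c_pos by (simp add: field_simps)
qed

end

theorem mainTheorem9:
  fixes c :: real
  assumes c: "0 < c" "c < 1"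
  shows "(\<forall>T K (X::real mat) (G::real mat).
           X \<in> carrier_mat T K \<and> full_col_rank X \<and> K < T \<and>
           G \<in> carrier_mat T T \<and> op_norm G < 1 - c \<longrightarrow>
           \<comment> \<open>(i)\<close>
           invertible_mat (1\<^sub>m T - G) \<and>
           invertible_mat (1\<^sub>m T - projP X * G) \<and>
           invertible_mat (X\<^sup>T * (1\<^sub>m T - G) * X) \<and>
           invertible_mat (1\<^sub>m T + AG G * projM X) \<and>
           \<comment> \<open>(ii)\<close>
           (1\<^sub>m T - G) * projMG X G = projM X * mat_inv (1\<^sub>m T + AG G * projM X) \<and>
           projPG X G = mat_inv (1\<^sub>m T - projP X * G) * projP X * (1\<^sub>m T - G) \<and>
           projMG X G = mat_inv (1\<^sub>m T - projP X * G) * projM X \<and>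
           (\<forall>y \<in> carrier_vec T.
              mat_inv (X\<^sup>T * (1\<^sub>m T - G) * X) * X\<^sup>T * (1\<^sub>m T - G) *\<^sub>v y =
              mat_inv (X\<^sup>T * X) * X\<^sup>T * mat_inv (1\<^sub>m T + AG G * projM X) *\<^sub>v y) \<and>
           \<comment> \<open>(iii), first part\<close>
           psd ((1\<^sub>m T - G) * projMG X G + (projMG X G)\<^sup>T * (1\<^sub>m T - G\<^sup>T))) \<and>
         (\<exists>c' C'. 0 < c' \<and> c' < C' \<and>
           (\<forall>T K (X::real mat) (G::real mat).
              X \<in> carrier_mat T K \<and> full_col_rank X \<and> K < T \<and>
              G \<in> carrier_mat T T \<and> op_norm G < 1 - c \<longrightarrow>
              c' < mat_trace ((1\<^sub>m T - G) * projMG X G) / real (T - K) \<and>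
              mat_trace ((1\<^sub>m T - G) * projMG X G) / real (T - K) < C'))"
proof (rule conjI, goal_cases)
  case 1
  show ?case
  proof (intro allI impI, goal_cases)
    case (1 T K X G)
    then interpret contracting_regressor X T K G c using c by unfold_locales auto
    show ?case
      using invertible_I_minus_G invertible_I_minus_PG invertible_weighted_gram invertible_I_plus_AG_M
        I_minus_G_mult_projMG projPG_resolvent projMG_resolvent weighted_estimator_eq psd_symmetric_part
      by simp
  qed
next
  case 2
  have "c * c < 2 * 2" using c by (intro mult_strict_mono) auto
  then have half_less: "c / 2 < 2 / c" using c by (simp add: field_simps)
  show ?case
  proof (rule exI[of _ "c / 2"], rule exI[of _ "2 / c"], intro conjI allI impI, goal_cases)
    case (3 T K X G)
    then interpret contracting_regressor X T K G c using c by unfold_locales auto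
    show ?case using trace_ratio_bounds(1) 3 by simp
  next
    case (4 T K X G)
    then interpret contracting_regressor X T K G c using c by unfold_locales auto
    show ?case using trace_ratio_bounds(2) 4 by simp
  qed (use c half_less in simp_all)
qed

end
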